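(* Let $k\ge 1$, let $a_0,\dots,a_{k-1}\in\mathbb{Q}$ with $a_0\neq 0$, and let $u:\mathbb{N}_0\to\mathbb{Q}$ be the linear recurrence sequence with given initial values $u(0),\dots,u(k-1)\in\mathbb{Q}$ and $u(n+k)=\sum_{i=0}^{k-1}a_i\,u(n+i)$ for all $n\ge 0$. Define sequences $x_0,\dots,x_{k-1}:\mathbb{N}_0\to\mathbb{Q}$ by the initial values $$x_0(0)=u(0),\qquad x_i(0)=u(i)\cdot\prod_{\ell=0}^{i-1}x_\ell(0)\quad(1\le i<k),$$ and the recurrences, for all $n\ge 0$, $$x_i(n+1)=x_{i+1}(n)\quad(0\le i<k-1),\qquad x_{k-1}(n+1)=\sum_{i=0}^{k-1}a_i\,x_i(n)\prod_{\ell=i}^{k-1}x_\ell(n).$$ Define sequences $s_0,\dots,s_{k-1}:\mathbb{N}_0\to\mathbb{Q}$ by $s_0(0)=1$, $s_i(0)=\prod_{\ell=0}^{i-1}x_\ell(0)$ for $1\le i<k$, and for all $n\ge0$: $s_i(n+1)=s_{i+1}(n)$ for $0\le i<k-1$ and $s_{k-1}(n+1)=s_{k-1}(n)\cdot x_{k-1}(n)$. Then for all $n\ge 0$ and all $0\le i<k$, $$x_i(n)=s_i(n)\cdot u(n+i)\qquad\text{and}\qquad s_i(n)=\prod_{\ell=0}^{n-1}x_0(\ell)\cdot\prod_{\ell=0}^{i-1}x_\ell(n),$$ where empty products equal $1$. *)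

theory Defs
  imports Complex_Main
begin

end

theory Submission
  imports Defs
begin

(* Both systems are shift registers, x_i(n) = x_0(n+i) and s_i(n) = s_0(n+i), so everything
   reduces to the diagonal sequences X = x_0 and S = s_0. The recurrence for s makes S the
   sequence of partial products of X. The product in the recurrence for x then telescopes,
   S(n+i) * prod_{l=i}^{k-1} X(n+l) = S(n+k), so if X = S u holds below n+k, the recurrence
   for x turns into S(n+k) times the recurrence for u, giving X(n+k) = S(n+k) u(n+k). *)

lemma prod_lessThan_add:
  fixes f :: "nat \<Rightarrow> 'a::comm_monoid_mult"
  shows "(\<Prod>l<m + n. f l) = (\<Prod>l<m. f l) * (\<Prod>l<n. f (m + l))"
  by (induction n) (simp_all add: ac_simps)

lemma prod_lessThan_mult_prod_atLeastAtMost: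
  fixes f :: "nat \<Rightarrow> 'a::comm_monoid_mult"
  assumes "i < k"
  shows "(\<Prod>l<n + i. f l) * (\<Prod>l\<in>{i..k - 1}. f (n + l)) = (\<Prod>l<n + k. f l)"
proof -
  have "(\<Prod>l\<in>{i..k - 1}. f (n + l)) = (\<Prod>l\<in>{n + i..<n + k}. f l)"
    using assms prod.shift_bounds_nat_ivl[of f i n k]
    by (simp add: atLeastLessThanSuc_atLeastAtMost[symmetric] add.commute)
  then show ?thesis
    using prod.atLeastLessThan_concat[of 0 "n + i" "n + k" f] assms
    by (simp add: atLeast0LessThan)
qed

definition shift_register :: "nat \<Rightarrow> (nat \<Rightarrow> nat \<Rightarrow> 'a) \<Rightarrow> bool" where
  "shift_register k f \<longleftrightarrow> (\<forall>i n. Suc i < k \<longrightarrow> f i (Suc n) = f (Suc i) n)"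

lemma shift_register_eq_diagonal:
  assumes "shift_register k f" and "i < k"
  shows "f i n = f 0 (n + i)"
  using \<open>i < k\<close>
proof (induction i arbitrary: n)
  case (Suc i)
  have "f (Suc i) n = f i (Suc n)"
    using \<open>shift_register k f\<close> Suc.prems by (simp add: shift_register_def)
  also have "\<dots> = f 0 (n + Suc i)"
    using Suc by simp
  finally show ?case .
qed simp

lemma prod_shift_register_eq_diagonal:
  assumes "shift_register k f" and "L \<subseteq> {..<k}"
  shows "(\<Prod>l\<in>L. f l n) = (\<Prod>l\<in>L. f 0 (n + l))"
  using assms by (intro prod.cong refl shift_register_eq_diagonal) auto

lemma partial_products_eqI:
  fixes S X :: "nat \<Rightarrow> 'a::comm_monoid_mult"
  assumes "0 < k"
    and init: "\<And>m. m < k \<Longrightarrow> S m = (\<Prod>l<m. X l)"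
    and step: "\<And>m. k \<le> Suc m \<Longrightarrow> S (Suc m) = S m * X m"
  shows "S m = (\<Prod>l<m. X l)"
proof (induction m)
  case 0
  then show ?case using init[of 0] \<open>0 < k\<close> by simp
next
  case (Suc m)
  then show ?case
    using init[of "Suc m"] step[of m] by (cases "Suc m < k") simp_all
qed

lemma eq_partial_products_mult_recurrence:
  fixes X u a :: "nat \<Rightarrow> 'a::comm_semiring_1"
  assumes u_rec: "\<And>n. u (n + k) = (\<Sum>i<k. a i * u (n + i))"
    and X_init: "\<And>m. m < k \<Longrightarrow> X m = (\<Prod>l<m. X l) * u m"
    and X_rec: "\<And>n. X (n + k) = (\<Sum>i<k. a i * X (n + i) * (\<Prod>l\<in>{i..k - 1}. X (n + l)))"
  shows "X m = (\<Prod>l<m. X l) * u m"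
proof (induction m rule: less_induct)
  case (less m)
  show ?case
  proof (cases "m < k")
    case False
    then obtain n where m: "m = n + k"
      using le_Suc_ex not_less by (metis add.commute)
    have "X m = (\<Sum>i<k. a i * X (n + i) * (\<Prod>l\<in>{i..k - 1}. X (n + l)))"
      using X_rec m by simp
    also have "\<dots> = (\<Sum>i<k. a i * u (n + i) * (\<Prod>l<m. X l))"
    proof (rule sum.cong)
      fix i assume "i \<in> {..<k}"
      then have "i < k" by simp
      then have "X (n + i) * (\<Prod>l\<in>{i..k - 1}. X (n + l)) = u (n + i) * (\<Prod>l<m. X l)"
        using less[of "n + i"] prod_lessThan_mult_prod_atLeastAtMost[of i k X n] m
        by (simp add: ac_simps)
      then show "a i * X (n + i) * (\<Prod>l\<in>{i..k - 1}. X (n + l)) = a i * u (n + i) * (\<Prod>l<m. X l)"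
        by (simp add: ac_simps)
    qed simp
    also have "\<dots> = (\<Prod>l<m. X l) * u m"
      by (metis m u_rec sum_distrib_right mult.commute)
    finally show ?thesis .
  qed (rule X_init)
qed

lemma shift_register_partial_products:
  fixes x s :: "nat \<Rightarrow> nat \<Rightarrow> 'a::comm_monoid_mult"
  assumes "0 < k"
    and x_shift: "shift_register k x"
    and s_shift: "shift_register k s"
    and s_init: "\<And>i. i < k \<Longrightarrow> s i 0 = (\<Prod>l<i. x l 0)"
    and s_last: "\<And>n. s (k - 1) (Suc n) = s (k - 1) n * x (k - 1) n"
  shows "s 0 m = (\<Prod>l<m. x 0 l)"
proof (rule partial_products_eqI[OF \<open>0 < k\<close>])
  show "s 0 m = (\<Prod>l<m. x 0 l)" if "m < k" for m
    using s_init[OF that] shift_register_eq_diagonal[OF s_shift that, of 0]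
      prod_shift_register_eq_diagonal[OF x_shift, of "{..<m}" 0] that
    by simp
  show "s 0 (Suc m) = s 0 m * x 0 m" if "k \<le> Suc m" for m
  proof -
    define n where "n = m - (k - 1)"
    have m: "m = n + (k - 1)" and last: "k - 1 < k"
      using that n_def \<open>0 < k\<close> by simp_all
    have "s 0 (Suc m) = s (k - 1) (Suc n)"
      using shift_register_eq_diagonal[OF s_shift last, of "Suc n"] m by simp
    also have "\<dots> = s (k - 1) n * x (k - 1) n"
      by (rule s_last)
    also have "\<dots> = s 0 m * x 0 m"
      using shift_register_eq_diagonal[OF s_shift last, of n]
        shift_register_eq_diagonal[OF x_shift last, of n] m
      by simp
    finally show ?thesis .
  qed
qed

lemma shift_register_recurrence_solution:
  fixes x :: "nat \<Rightarrow> nat \<Rightarrow> 'a::comm_semiring_1" and u a :: "nat \<Rightarrow> 'a"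
  assumes "0 < k"
    and u_rec: "\<And>n. u (n + k) = (\<Sum>i<k. a i * u (n + i))"
    and x_shift: "shift_register k x"
    and x_init: "\<And>i. i < k \<Longrightarrow> x i 0 = u i * (\<Prod>l<i. x l 0)"
    and x_last: "\<And>n. x (k - 1) (Suc n) = (\<Sum>i<k. a i * x i n * (\<Prod>l\<in>{i..k - 1}. x l n))"
  shows "x 0 m = (\<Prod>l<m. x 0 l) * u m"
proof (rule eq_partial_products_mult_recurrence[OF u_rec])
  note diag = shift_register_eq_diagonal[OF x_shift]
  note prod_diag = prod_shift_register_eq_diagonal[OF x_shift]
  show "x 0 m = (\<Prod>l<m. x 0 l) * u m" if "m < k" for m
    using x_init[OF that] diag[OF that, of 0] prod_diag[of "{..<m}" 0] that
    by (simp add: mult.commute)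
  show "x 0 (n + k) = (\<Sum>i<k. a i * x 0 (n + i) * (\<Prod>l\<in>{i..k - 1}. x 0 (n + l)))" for n
  proof -
    have "x 0 (n + k) = x (k - 1) (Suc n)"
      using diag[of "k - 1" "Suc n"] \<open>0 < k\<close> by simp
    also have "\<dots> = (\<Sum>i<k. a i * x i n * (\<Prod>l\<in>{i..k - 1}. x l n))"
      by (rule x_last)
    also have "\<dots> = (\<Sum>i<k. a i * x 0 (n + i) * (\<Prod>l\<in>{i..k - 1}. x 0 (n + l)))"
    proof (intro sum.cong refl)
      fix i assume "i \<in> {..<k}"
      moreover have "{i..k - 1} \<subseteq> {..<k}"
        using \<open>0 < k\<close> by auto
      ultimately show "a i * x i n * (\<Prod>l\<in>{i..k - 1}. x l n) =
          a i * x 0 (n + i) * (\<Prod>l\<in>{i..k - 1}. x 0 (n + l))"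
        using diag[of i n] prod_diag[of "{i..k - 1}" n] by simp
    qed
    finally show ?thesis .
  qed
qed

theorem lemma3p2:
  fixes k :: nat and a u :: "nat \<Rightarrow> rat" and x s :: "nat \<Rightarrow> nat \<Rightarrow> rat"
  assumes k: "k \<ge> 1"
    and a0: "a 0 \<noteq> 0"
    and u_rec: "\<forall>n. u (n + k) = (\<Sum>i<k. a i * u (n + i))"
    and x_init0: "x 0 0 = u 0"
    and x_init: "\<forall>i. 1 \<le> i \<and> i < k \<longrightarrow> x i 0 = u i * (\<Prod>l<i. x l 0)"
    and x_shift: "\<forall>n i. i < k - 1 \<longrightarrow> x i (Suc n) = x (Suc i) n"
    and x_last: "\<forall>n. x (k - 1) (Suc n) = (\<Sum>i<k. a i * x i n * (\<Prod>l\<in>{i..k - 1}. x l n))"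
    and s_init0: "s 0 0 = 1"
    and s_init: "\<forall>i. 1 \<le> i \<and> i < k \<longrightarrow> s i 0 = (\<Prod>l<i. x l 0)"
    and s_shift: "\<forall>n i. i < k - 1 \<longrightarrow> s i (Suc n) = s (Suc i) n"
    and s_last: "\<forall>n. s (k - 1) (Suc n) = s (k - 1) n * x (k - 1) n"
  shows "\<forall>n i. i < k \<longrightarrow>
           x i n = s i n * u (n + i) \<and>
           s i n = (\<Prod>l<n. x 0 l) * (\<Prod>l<i. x l n)"
proof -
  have x_register: "shift_register k x" and s_register: "shift_register k s"
    using x_shift s_shift by (simp_all add: shift_register_def)
  have x_init_lt: "x i 0 = u i * (\<Prod>l<i. x l 0)" if "i < k" for i
    using that x_init0 x_init by (cases i) auto
  have s_init_lt: "s i 0 = (\<Prod>l<i. x l 0)" if "i < k" for i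
    using that s_init0 s_init by (cases i) auto
  have s_partial: "s 0 m = (\<Prod>l<m. x 0 l)" for m
    using shift_register_partial_products[OF _ x_register s_register s_init_lt] k s_last by simp
  have x_eq: "x 0 m = (\<Prod>l<m. x 0 l) * u m" for m
    using shift_register_recurrence_solution[OF _ _ x_register x_init_lt] k u_rec x_last by simp
  show ?thesis
  proof (intro allI impI conjI)
    fix n i assume i: "i < k"
    note x_diag = shift_register_eq_diagonal[OF x_register i, of n]
      and s_diag = shift_register_eq_diagonal[OF s_register i, of n]
    show "x i n = s i n * u (n + i)"
      using x_diag s_diag x_eq[of "n + i"] s_partial[of "n + i"] by simp
    show "s i n = (\<Prod>l<n. x 0 l) * (\<Prod>l<i. x l n)"
      using s_diag s_partial[of "n + i"] prod_lessThan_add[of "x 0" n i]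
        prod_shift_register_eq_diagonal[OF x_register, of "{..<i}" n] i
      by simp
  qed
qed

end
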